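(* Let $k\in\mathbb N$ and $f\in\mathcal R^0_{[1]}(\mathbb R^2)$. Then $f\in\mathcal R^k_{[1]}(\mathbb R^2)$ if and only if $f$ has a polynomial expansion of order $k$ at every point of $\mathbb R^2$, i.e. for every $a\in\mathbb R^2$ there is a polynomial $P_k\in\mathbb R[x,y]$ of degree at most $k$ such that $f(a+h)=f(a)+P_k(h)+o(\|h\|^k)$ as $h\to 0$.
   Context: For $k\in\mathbb N\cup\{\infty\}$, $\mathcal R^k(\mathbb R^2)$ denotes the ring of functions $f:\mathbb R^2\to\mathbb R$ of class $C^k$ that coincide with $p/q$ ($p,q$ polynomials, $q$ nonvanishing there) on some nonempty Zariski open set. For $l\in\mathbb N$: consider compositions $\pi:M\to\mathbb R^2$ of successive blowings-up $M_i\to M_{i-1}$ ($M_0=\mathbb R^2$), each centred at points. An infinitely near point of order $j$ is a sequence $a_0\in M_0,\dots,a_j\in M_j$ where $M_i$ is the blowing-up of $M_{i-1}$ at $a_{i-1}$ and $a_i$ maps to $a_{i-1}$; the number of stages of $\pi$ is the maximal order of infinitely near points in $M$. $\mathcal R^k_{[l]}(\mathbb R^2)$ is the set of $f\in\mathcal R^k(\mathbb R^2)$ for which there is such a $\pi$ with at most $l$ stages such that $f\circ\pi$ is regular on $M$. *)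

theory Defs
  imports "HOL-Analysis.Analysis" "HOL-Library.Landau_Symbols"
begin

definition poly2 :: "(real \<times> real \<Rightarrow> real) \<Rightarrow> bool" where
  "poly2 p \<longleftrightarrow> (\<exists>N c. \<forall>x y. p (x, y) = (\<Sum>i\<le>N. \<Sum>j\<le>N. c i j * x ^ i * y ^ j))"

definition poly2_deg_le :: "nat \<Rightarrow> (real \<times> real \<Rightarrow> real) \<Rightarrow> bool" where
  "poly2_deg_le k p \<longleftrightarrow> (\<exists>c. \<forall>x y. p (x, y) = (\<Sum>i\<le>k. \<Sum>j\<le>k - i. c i j * x ^ i * y ^ j))"

fun Ck :: "nat \<Rightarrow> (real \<times> real \<Rightarrow> real) \<Rightarrow> bool" where
  "Ck 0 f = continuous_on UNIV f"
| "Ck (Suc k) f = (\<exists>g1 g2. (\<forall>z. (f has_derivative (\<lambda>h. g1 z * fst h + g2 z * snd h)) (at z))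
                       \<and> Ck k g1 \<and> Ck k g2)"

text \<open>Rational function: coincides with p/q on a nonempty Zariski open set
  (every nonempty Zariski open set contains a nonempty basic open set {r \<noteq> 0}).\<close>
definition rational2 :: "(real \<times> real \<Rightarrow> real) \<Rightarrow> bool" where
  "rational2 f \<longleftrightarrow> (\<exists>p q. poly2 p \<and> poly2 q \<and> (\<exists>z. q z \<noteq> 0) \<and>
                       (\<forall>z. q z \<noteq> 0 \<longrightarrow> f z = p z / q z))"

definition Rk :: "nat \<Rightarrow> (real \<times> real \<Rightarrow> real) \<Rightarrow> bool" where
  "Rk k f \<longleftrightarrow> Ck k f \<and> rational2 f"

definition regular_at :: "(real \<times> real \<Rightarrow> real) \<Rightarrow> real \<times> real \<Rightarrow> bool" where
  "regular_at g z \<longleftrightarrow> (\<exists>p q. poly2 p \<and> poly2 q \<and> q z \<noteq> 0 \<and>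
                          (\<forall>w. q w \<noteq> 0 \<longrightarrow> g w = p w / q w))"

text \<open>f \<circ> \<pi> is regular on M, where \<pi> : M \<rightarrow> R^2 is the blowing-up of R^2 at the
  finite set S of points. M is covered by R^2 - S and, for each a \<in> S, by the two
  standard charts (u,v) \<mapsto> a + (u, u v) and (u,v) \<mapsto> a + (u v, u), the exceptional
  divisor over a being {u = 0} in both charts.\<close>
definition blowup_regular :: "(real \<times> real) set \<Rightarrow> (real \<times> real \<Rightarrow> real) \<Rightarrow> bool" where
  "blowup_regular S f \<longleftrightarrow> finite S \<and>
     (\<forall>z. z \<notin> S \<longrightarrow> regular_at f z) \<and>
     (\<forall>a\<in>S. \<forall>v.
        regular_at (\<lambda>w. f (fst a + fst w, snd a + fst w * snd w)) (0, v) \<and>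
        regular_at (\<lambda>w. f (fst a + fst w * snd w, snd a + fst w)) (0, v))"

text \<open>R^k_[1](R^2): a composition of point blowings-up with at most one stage is
  exactly a blowing-up of R^2 at a finite (possibly empty) set of points.\<close>
definition Rk1 :: "nat \<Rightarrow> (real \<times> real \<Rightarrow> real) \<Rightarrow> bool" where
  "Rk1 k f \<longleftrightarrow> Rk k f \<and> (\<exists>S. blowup_regular S f)"

definition has_poly_expansion :: "nat \<Rightarrow> (real \<times> real \<Rightarrow> real) \<Rightarrow> real \<times> real \<Rightarrow> bool" where
  "has_poly_expansion k f a \<longleftrightarrow> (\<exists>P. poly2_deg_le k P \<and>
     (\<lambda>h. f (a + h) - f a - P h) \<in> o[at 0](\<lambda>h. norm h ^ k))"

end

theory Submission
  imports Defs "HOL-Computational_Algebra.Polynomial"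
begin

text \<open>
  Only the converse needs work. For f in R^0_[1], f is continuous and, over every point a,
  f composed with the charts (u, v) \<mapsto> a + (u, u v) and (u, v) \<mapsto> a + (u v, u) of the
  blowing-up at a is a quotient p/q with q(0, v) \<noteq> 0 (if a is not blown up this follows
  from regularity of f at a). Suppose f has an expansion of order k + 1 at a and let
  F = f - f(a) - P(\<cdot> - a) be the Taylor remainder, which is o(|h|^(k+1)). Along the lines
  {v = const} of a chart this forces u^(k+2) to divide p. Differentiating F in the chart
  then shows that the partial derivatives of F are u^(k+1) times functions regular near
  the exceptional divisor, hence bounded there; by compactness of the divisor they are
  O(|h|^(k+1)) at a. So the partial derivatives of f have expansions of order k at every
  point, and are again regular on the blowing-ups, and induction on k gives C^k. The
  forward direction is Taylor's theorem, proved by integrating the expansions of the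
  partial derivatives along segments.
\<close>

section \<open>Polynomial functions of two variables\<close>

inductive polyfun :: "(real \<times> real \<Rightarrow> real) \<Rightarrow> bool" where
  polyfun_const: "polyfun (\<lambda>z. c)"
| polyfun_fst: "polyfun fst"
| polyfun_snd: "polyfun snd"
| polyfun_add: "polyfun p \<Longrightarrow> polyfun q \<Longrightarrow> polyfun (\<lambda>z. p z + q z)"
| polyfun_mult: "polyfun p \<Longrightarrow> polyfun q \<Longrightarrow> polyfun (\<lambda>z. p z * q z)"

lemma polyfun_diff: "polyfun p \<Longrightarrow> polyfun q \<Longrightarrow> polyfun (\<lambda>z. p z - q z)"
  using polyfun_add[OF _ polyfun_mult[OF polyfun_const, of q "-1"], of p] by simp

lemma polyfun_power: "polyfun p \<Longrightarrow> polyfun (\<lambda>z. p z ^ n)"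
  by (induction n) (auto intro: polyfun.intros)

lemma polyfun_sum:
  "finite A \<Longrightarrow> (\<And>i. i \<in> A \<Longrightarrow> polyfun (f i)) \<Longrightarrow> polyfun (\<lambda>z. \<Sum>i\<in>A. f i z)"
  by (induction A rule: finite_induct) (auto intro: polyfun.intros)

lemma polyfun_compose:
  "polyfun p \<Longrightarrow> polyfun r \<Longrightarrow> polyfun s \<Longrightarrow> polyfun (\<lambda>z. p (r z, s z))"
  by (induction p rule: polyfun.induct) (auto intro: polyfun.intros)

lemma polyfun_shift:
  assumes "polyfun p"
  shows "polyfun (\<lambda>z. p (z - a))"
proof -
  have "polyfun (\<lambda>z. p (fst z - fst a, snd z - snd a))"
    by (intro polyfun_compose[OF assms] polyfun_diff polyfun.intros)
  moreover have "z - a = (fst z - fst a, snd z - snd a)" for z :: "real \<times> real"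
    by (simp add: prod_eq_iff)
  ultimately show ?thesis by simp
qed

lemma polyfun_monomials: "polyfun (\<lambda>z. \<Sum>i\<in>I. \<Sum>j\<in>J i. c i j * fst z ^ i * snd z ^ j)"
  if "finite I" "\<And>i. finite (J i)"
  using that by (intro polyfun_sum polyfun_mult polyfun_power polyfun.intros) auto

lemma polyfun_has_derivative:
  assumes "polyfun p"
  obtains px py where "polyfun px" "polyfun py"
    "\<And>z. (p has_derivative (\<lambda>h. px z * fst h + py z * snd h)) (at z)"
proof -
  from assms have "\<exists>px py. polyfun px \<and> polyfun py \<and>
     (\<forall>z. (p has_derivative (\<lambda>h. px z * fst h + py z * snd h)) (at z))"
  proof (induction p rule: polyfun.induct)
    case (polyfun_const c)
    show ?case by (rule exI[of _ "\<lambda>z. 0"], rule exI[of _ "\<lambda>z. 0"]) (auto intro: polyfun.intros)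
  next
    case polyfun_fst
    show ?case
      by (intro exI[of _ "\<lambda>z. 1"] exI[of _ "\<lambda>z. 0"])
         (auto intro: polyfun.intros has_derivative_fst[OF has_derivative_ident])
  next
    case polyfun_snd
    show ?case
      by (intro exI[of _ "\<lambda>z. 0"] exI[of _ "\<lambda>z. 1"])
         (auto intro: polyfun.intros has_derivative_snd[OF has_derivative_ident])
  next
    case (polyfun_add p q)
    then obtain px py qx qy where "polyfun px" "polyfun py" "polyfun qx" "polyfun qy"
      and "\<And>z. (p has_derivative (\<lambda>h. px z * fst h + py z * snd h)) (at z)"
      and "\<And>z. (q has_derivative (\<lambda>h. qx z * fst h + qy z * snd h)) (at z)" by blast
    then show ?case
      by (intro exI[of _ "\<lambda>z. px z + qx z"] exI[of _ "\<lambda>z. py z + qy z"])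
         (auto intro!: polyfun.intros has_derivative_eq_rhs[OF has_derivative_add]
           simp: algebra_simps)
  next
    case (polyfun_mult p q)
    then obtain px py qx qy where "polyfun px" "polyfun py" "polyfun qx" "polyfun qy"
      and "\<And>z. (p has_derivative (\<lambda>h. px z * fst h + py z * snd h)) (at z)"
      and "\<And>z. (q has_derivative (\<lambda>h. qx z * fst h + qy z * snd h)) (at z)" by blast
    with polyfun_mult.hyps show ?case
      by (intro exI[of _ "\<lambda>z. p z * qx z + px z * q z"] exI[of _ "\<lambda>z. p z * qy z + py z * q z"])
         (auto intro!: polyfun.intros has_derivative_eq_rhs[OF has_derivative_mult]
           simp: algebra_simps)
  qed
  with that show thesis by blast
qed

lemma polyfun_isCont: "polyfun p \<Longrightarrow> isCont p z"
  by (metis polyfun_has_derivative has_derivative_continuous)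

lemma open_polyfun_nonzero: "polyfun q \<Longrightarrow> open {w. q w \<noteq> 0}"
  by (simp add: open_Collect_neq continuous_at_imp_continuous_on polyfun_isCont)

lemma polyfun_tendsto_along_line:
  "polyfun p \<Longrightarrow> ((\<lambda>u. p (u, v)) \<longlongrightarrow> p (0, v)) (at 0)"
  by (rule isCont_tendsto_compose[OF polyfun_isCont]) (auto intro!: tendsto_eq_intros)

text \<open>A polynomial in two variables as a polynomial in the first variable whose
  coefficients are polynomials in the second.\<close>
definition poly_poly :: "real poly poly \<Rightarrow> real \<times> real \<Rightarrow> real" where
  "poly_poly Q z = poly (poly Q [:fst z:]) (snd z)"

lemma polyfun_imp_poly_poly: "polyfun p \<Longrightarrow> \<exists>Q. p = poly_poly Q"
proof (induction p rule: polyfun.induct)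
  case (polyfun_const c)
  show ?case by (rule exI[of _ "[:[:c:]:]"]) (auto simp: poly_poly_def)
next
  case polyfun_fst
  show ?case by (rule exI[of _ "[:0, 1:]"]) (auto simp: poly_poly_def fun_eq_iff)
next
  case polyfun_snd
  show ?case by (rule exI[of _ "[:[:0, 1:]:]"]) (auto simp: poly_poly_def fun_eq_iff)
next
  case (polyfun_add p q)
  then obtain Q1 Q2 where "p = poly_poly Q1" "q = poly_poly Q2" by blast
  then show ?case by (intro exI[of _ "Q1 + Q2"]) (auto simp: poly_poly_def fun_eq_iff)
next
  case (polyfun_mult p q)
  then obtain Q1 Q2 where "p = poly_poly Q1" "q = poly_poly Q2" by blast
  then show ?case by (intro exI[of _ "Q1 * Q2"]) (auto simp: poly_poly_def fun_eq_iff)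
qed

lemma polyfun_poly_snd: "polyfun (\<lambda>z. poly c (snd z))"
proof (induction c)
  case (pCons a c)
  have "polyfun (\<lambda>z. a + snd z * poly c (snd z))"
    by (intro polyfun.intros pCons)
  then show ?case by simp
qed (auto intro: polyfun.intros)

lemma polyfun_poly_poly: "polyfun (poly_poly Q)"
proof (induction Q)
  case (pCons c Q)
  have "polyfun (\<lambda>z. poly c (snd z) + fst z * poly_poly Q z)"
    by (intro polyfun.intros polyfun_poly_snd pCons)
  moreover have "poly_poly (pCons c Q) = (\<lambda>z. poly c (snd z) + fst z * poly_poly Q z)"
    by (auto simp: poly_poly_def fun_eq_iff)
  ultimately show ?case by simp
qed (simp add: poly_poly_def polyfun.intros)

lemma poly_as_sum_atMost:
  fixes x :: "'a::comm_semiring_1"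
  assumes "degree p \<le> n"
  shows "poly p x = (\<Sum>i\<le>n. coeff p i * x ^ i)"
proof -
  have "(\<Sum>i\<le>n. coeff p i * x ^ i) = (\<Sum>i\<le>degree p. coeff p i * x ^ i)"
    by (rule sum.mono_neutral_right) (use assms in \<open>auto simp: coeff_eq_0\<close>)
  then show ?thesis by (simp add: poly_altdef)
qed

lemma poly2_poly_poly: "poly2 (poly_poly Q)"
proof -
  define N where "N = degree Q + (\<Sum>i\<le>degree Q. degree (coeff Q i))"
  have deg_Q: "degree Q \<le> N" unfolding N_def by simp
  have deg_coeff: "degree (coeff Q i) \<le> N" for i
  proof (cases "i \<le> degree Q")
    case True
    have "degree (coeff Q i) \<le> (\<Sum>i\<le>degree Q. degree (coeff Q i))"
      by (rule member_le_sum) (use True in auto)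
    then show ?thesis unfolding N_def by simp
  qed (simp add: coeff_eq_0)
  have "poly_poly Q (x, y) = (\<Sum>i\<le>N. \<Sum>j\<le>N. coeff (coeff Q i) j * x ^ i * y ^ j)" for x y
  proof -
    have "poly_poly Q (x, y) = (\<Sum>i\<le>N. poly (coeff Q i) y * x ^ i)"
      by (simp add: poly_poly_def poly_as_sum_atMost[OF deg_Q] poly_sum poly_mult poly_power)
    also have "\<dots> = (\<Sum>i\<le>N. (\<Sum>j\<le>N. coeff (coeff Q i) j * y ^ j) * x ^ i)"
      using poly_as_sum_atMost[OF deg_coeff] by simp
    finally show ?thesis
      by (simp add: sum_distrib_left sum_distrib_right mult_ac)
  qed
  then show ?thesis
    unfolding poly2_def by (intro exI[of _ N] exI[of _ "\<lambda>i j. coeff (coeff Q i) j"]) auto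
qed

lemma poly2_iff_polyfun: "poly2 p \<longleftrightarrow> polyfun p"
proof
  assume "poly2 p"
  then obtain N c where "\<forall>x y. p (x, y) = (\<Sum>i\<le>N. \<Sum>j\<le>N. c i j * x ^ i * y ^ j)"
    unfolding poly2_def by blast
  then have "p = (\<lambda>z. \<Sum>i\<le>N. \<Sum>j\<le>N. c i j * fst z ^ i * snd z ^ j)"
    by (auto simp: fun_eq_iff)
  then show "polyfun p" using polyfun_monomials by simp
qed (use polyfun_imp_poly_poly poly2_poly_poly in blast)

lemma polyfun_divisible_fst:
  assumes "polyfun p" "polyfun q" "q (0, v0) \<noteq> 0"
    and "\<And>v. q (0, v) \<noteq> 0 \<Longrightarrow> p (0, v) = 0"
  obtains p1 where "polyfun p1" "\<And>w. p w = fst w * p1 w"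
proof -
  obtain Q where Q: "p = poly_poly Q" using polyfun_imp_poly_poly[OF assms(1)] by blast
  obtain R where R: "q = poly_poly R" using polyfun_imp_poly_poly[OF assms(2)] by blast
  have on_line: "poly_poly S (0, v) = poly (coeff S 0) v" for S v
    by (simp add: poly_poly_def poly_0_coeff_0)
  have "coeff R 0 \<noteq> 0" using assms(3) on_line R by auto
  then have roots_R: "finite {v. poly (coeff R 0) v = 0}" by (rule poly_roots_finite)
  have "coeff Q 0 = 0"
  proof (rule ccontr)
    assume "coeff Q 0 \<noteq> 0"
    then have "finite {v. poly (coeff Q 0) v = 0}" by (rule poly_roots_finite)
    moreover have "UNIV = {v. poly (coeff Q 0) v = 0} \<union> {v. poly (coeff R 0) v = 0}"
      using assms(4) on_line Q R by auto
    ultimately show False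
      using roots_R infinite_UNIV_char_0[where 'a=real]
      by (metis finite_Un)
  qed
  then obtain Q' where "Q = pCons 0 Q'" by (metis pCons_cases coeff_pCons_0)
  then have "p w = fst w * poly_poly Q' w" for w by (simp add: Q poly_poly_def)
  with that polyfun_poly_poly show thesis by blast
qed

definition monomial_sum :: "nat \<Rightarrow> (nat \<Rightarrow> nat \<Rightarrow> real) \<Rightarrow> real \<times> real \<Rightarrow> real" where
  "monomial_sum k c h = (\<Sum>i\<le>k. \<Sum>j\<le>k - i. c i j * fst h ^ i * snd h ^ j)"

lemma poly2_deg_le_iff_monomial_sum: "poly2_deg_le k P \<longleftrightarrow> (\<exists>c. P = monomial_sum k c)"
  unfolding poly2_deg_le_def monomial_sum_def by (auto simp: fun_eq_iff)

lemma polyfun_monomial_sum: "polyfun (monomial_sum k c)"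
  unfolding monomial_sum_def by (intro polyfun_monomials) auto

lemma polyfun_of_poly2_deg_le: "poly2_deg_le k P \<Longrightarrow> polyfun P"
  by (auto simp: poly2_deg_le_iff_monomial_sum polyfun_monomial_sum)

lemma poly2_deg_le_zero: "poly2_deg_le k (\<lambda>h. 0)"
  unfolding poly2_deg_le_def by (rule exI[of _ "\<lambda>i j. 0"]) simp

lemma poly2_deg_le_add:
  assumes "poly2_deg_le k A" "poly2_deg_le k B"
  shows "poly2_deg_le k (\<lambda>h. A h + B h)"
proof -
  obtain a b where "A = monomial_sum k a" "B = monomial_sum k b"
    using assms by (auto simp: poly2_deg_le_iff_monomial_sum)
  then have "(\<lambda>h. A h + B h) = monomial_sum k (\<lambda>i j. a i j + b i j)"
    by (auto simp: fun_eq_iff monomial_sum_def sum.distrib distrib_right)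
  then show ?thesis by (auto simp: poly2_deg_le_iff_monomial_sum)
qed

lemma poly2_deg_le_const: "poly2_deg_le k (\<lambda>h. d)"
proof -
  have "(\<Sum>j\<le>m. (if j = 0 then d else 0) * y ^ j) = d" for m and y :: real
    by (induction m) auto
  then have "monomial_sum k (\<lambda>i j. if i = 0 \<and> j = 0 then d else 0) h = d" for h
    unfolding monomial_sum_def by (simp add: if_distrib[of "\<lambda>x. x * _"] sum.atMost_shift
      cong: if_cong)
  then show ?thesis
    unfolding poly2_deg_le_iff_monomial_sum
    by (intro exI[of _ "\<lambda>i j. if i = 0 \<and> j = 0 then d else 0"]) (simp add: fun_eq_iff)
qed

lemma has_derivative_monomial:
  "((\<lambda>h::real\<times>real. c * fst h ^ i * snd h ^ j) has_derivative
     (\<lambda>d. (c * of_nat i * fst h ^ (i - 1) * snd h ^ j) * fst d +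
          (c * fst h ^ i * (of_nat j * snd h ^ (j - 1))) * snd d)) (at h)"
  by (rule has_derivative_eq_rhs,
      (rule has_derivative_mult has_derivative_const has_derivative_power
        has_derivative_fst has_derivative_snd has_derivative_ident)+)
     (auto simp: fun_eq_iff algebra_simps)

lemma sum_atMost_Suc_diff_shift:
  assumes "i \<le> k"
  shows "(\<Sum>j\<le>Suc k - i. g j) = g 0 + (\<Sum>j\<le>k - i. g (Suc j))"
  using assms by (simp only: Suc_diff_le sum.atMost_Suc_shift)

lemma poly2_deg_le_has_derivative:
  assumes "poly2_deg_le (Suc k) P"
  obtains Px Py where "poly2_deg_le k Px" "poly2_deg_le k Py"
    "\<And>h. (P has_derivative (\<lambda>d. Px h * fst d + Py h * snd d)) (at h)"
proof -
  obtain c where c: "P = monomial_sum (Suc k) c"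
    using assms by (auto simp: poly2_deg_le_iff_monomial_sum)
  define Px where "Px h = (\<Sum>i\<le>Suc k. \<Sum>j\<le>Suc k - i.
    c i j * of_nat i * fst h ^ (i - 1) * snd h ^ j)" for h
  define Py where "Py h = (\<Sum>i\<le>Suc k. \<Sum>j\<le>Suc k - i.
    c i j * fst h ^ i * (of_nat j * snd h ^ (j - 1)))" for h
  have "(P has_derivative (\<lambda>d. Px h * fst d + Py h * snd d)) (at h)" for h
    unfolding c monomial_sum_def
    by (rule has_derivative_eq_rhs,
        (rule has_derivative_sum has_derivative_monomial)+)
       (simp add: fun_eq_iff Px_def Py_def sum.distrib sum_distrib_right distrib_right)
  moreover have "Px = monomial_sum k (\<lambda>i j. c (Suc i) j * of_nat (Suc i))"
    unfolding Px_def monomial_sum_def fun_eq_iff sum.atMost_Suc_shift by (simp add: mult_ac)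
  moreover have "Py = monomial_sum k (\<lambda>i j. c i (Suc j) * of_nat (Suc j))"
    unfolding Py_def monomial_sum_def fun_eq_iff sum.atMost_Suc
    by (auto intro!: sum.cong simp: sum_atMost_Suc_diff_shift mult_ac)
  ultimately show thesis
    using that unfolding poly2_deg_le_iff_monomial_sum by blast
qed

text \<open>A radial primitive of the vector field (monomial_sum k b1, monomial_sum k b2):
  integrating along the ray t \<mapsto> t h divides a monomial of degree i + j by i + j + 1.\<close>
definition ray_primitive ::
  "nat \<Rightarrow> (nat \<Rightarrow> nat \<Rightarrow> real) \<Rightarrow> (nat \<Rightarrow> nat \<Rightarrow> real) \<Rightarrow> real \<times> real \<Rightarrow> real" where
  "ray_primitive k b1 b2 h =
     (\<Sum>i\<le>k. \<Sum>j\<le>k - i. b1 i j / real (i + j + 1) * fst h ^ Suc i * snd h ^ j) +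
     (\<Sum>i\<le>k. \<Sum>j\<le>k - i. b2 i j / real (i + j + 1) * fst h ^ i * snd h ^ Suc j)"

lemma ray_primitive_zero: "ray_primitive k b1 b2 0 = 0"
  by (simp add: ray_primitive_def)

lemma poly2_deg_le_ray_primitive: "poly2_deg_le (Suc k) (ray_primitive k b1 b2)"
proof -
  define e1 where "e1 i j = (case i of 0 \<Rightarrow> 0 | Suc i' \<Rightarrow> b1 i' j / real (i' + j + 1))" for i j
  define e2 where "e2 i j = (case j of 0 \<Rightarrow> 0 | Suc j' \<Rightarrow> b2 i j' / real (i + j' + 1))" for i j
  have "(\<Sum>i\<le>k. \<Sum>j\<le>k - i. b1 i j / real (i + j + 1) * fst h ^ Suc i * snd h ^ j)
      = monomial_sum (Suc k) e1 h" for h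
    unfolding monomial_sum_def sum.atMost_Suc_shift[of _ k] by (simp add: e1_def)
  moreover have "(\<Sum>i\<le>k. \<Sum>j\<le>k - i. b2 i j / real (i + j + 1) * fst h ^ i * snd h ^ Suc j)
      = monomial_sum (Suc k) e2 h" for h
    unfolding monomial_sum_def sum.atMost_Suc[of _ k]
    by (auto intro!: sum.cong simp: e2_def sum_atMost_Suc_diff_shift)
  ultimately have "ray_primitive k b1 b2 = (\<lambda>h. monomial_sum (Suc k) e1 h + monomial_sum (Suc k) e2 h)"
    by (simp add: ray_primitive_def fun_eq_iff)
  then show ?thesis
    by (metis poly2_deg_le_add poly2_deg_le_iff_monomial_sum)
qed

lemma has_real_derivative_ray_monomial:
  "((\<lambda>t::real. (t * x) ^ i * (t * y) ^ j) has_real_derivative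
     (real (i + j) * t ^ (i + j - 1) * (x ^ i * y ^ j))) (at t)"
proof -
  have "(\<lambda>t::real. (t * x) ^ i * (t * y) ^ j) = (\<lambda>t. t ^ (i + j) * (x ^ i * y ^ j))"
    by (auto simp: fun_eq_iff power_mult_distrib power_add mult_ac)
  then show ?thesis
    by (auto intro!: derivative_eq_intros)
qed

lemma has_real_derivative_ray_primitive:
  fixes h :: "real \<times> real"
  shows "((\<lambda>t. ray_primitive k b1 b2 (t *\<^sub>R h)) has_real_derivative
    (monomial_sum k b1 (t *\<^sub>R h) * fst h + monomial_sum k b2 (t *\<^sub>R h) * snd h)) (at t)"
proof -
  define x y where "x = fst h" and "y = snd h"
  have ray: "(\<lambda>t. ray_primitive k b1 b2 (t *\<^sub>R h)) = (\<lambda>t.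
      (\<Sum>i\<le>k. \<Sum>j\<le>k - i. b1 i j / real (i + j + 1) * ((t * x) ^ Suc i * (t * y) ^ j))
    + (\<Sum>i\<le>k. \<Sum>j\<le>k - i. b2 i j / real (i + j + 1) * ((t * x) ^ i * (t * y) ^ Suc j)))"
    by (simp add: fun_eq_iff ray_primitive_def x_def y_def mult_ac)
  have deriv: "((\<lambda>t. ray_primitive k b1 b2 (t *\<^sub>R h)) has_real_derivative
      (\<Sum>i\<le>k. \<Sum>j\<le>k - i. b1 i j / real (i + j + 1) *
         (real (Suc i + j) * t ^ (Suc i + j - 1) * (x ^ Suc i * y ^ j)))
    + (\<Sum>i\<le>k. \<Sum>j\<le>k - i. b2 i j / real (i + j + 1) *
         (real (i + Suc j) * t ^ (i + Suc j - 1) * (x ^ i * y ^ Suc j)))) (at t)"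
    unfolding ray by (intro DERIV_add DERIV_sum DERIV_cmult has_real_derivative_ray_monomial)
  have term1: "b1 i j / real (i + j + 1) * (real (Suc i + j) * t ^ (Suc i + j - 1) *
      (x ^ Suc i * y ^ j)) = b1 i j * (t * x) ^ i * (t * y) ^ j * x"
    and term2: "b2 i j / real (i + j + 1) * (real (i + Suc j) * t ^ (i + Suc j - 1) *
      (x ^ i * y ^ Suc j)) = b2 i j * (t * x) ^ i * (t * y) ^ j * y" for i j
    by (simp_all add: power_mult_distrib power_add add.commute[of 1])
  have "(\<Sum>i\<le>k. \<Sum>j\<le>k - i. b1 i j / real (i + j + 1) *
         (real (Suc i + j) * t ^ (Suc i + j - 1) * (x ^ Suc i * y ^ j)))
    + (\<Sum>i\<le>k. \<Sum>j\<le>k - i. b2 i j / real (i + j + 1) *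
         (real (i + Suc j) * t ^ (i + Suc j - 1) * (x ^ i * y ^ Suc j)))
    = monomial_sum k b1 (t *\<^sub>R h) * x + monomial_sum k b2 (t *\<^sub>R h) * y"
    unfolding monomial_sum_def sum_distrib_right
    by (intro arg_cong2[where f="(+)"] sum.cong refl)
       (simp_all only: term1 term2, simp_all add: x_def y_def)
  with deriv show ?thesis by (simp add: x_def y_def)
qed

lemma add_Pair_right: "a + (x, y) = (fst a + x, snd a + y)"
  by (simp add: prod_eq_iff)

lemma abs_fst_le_norm: "\<bar>fst h\<bar> \<le> norm (h :: real \<times> real)"
  using norm_fst_le[of "fst h" "snd h"] by simp

lemma abs_snd_le_norm: "\<bar>snd h\<bar> \<le> norm (h :: real \<times> real)"
  using norm_snd_le[of "snd h" "fst h"] by simp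

lemma norm_swap: "norm (snd h, fst h) = norm (h :: real \<times> real)"
  by (cases h) (simp add: norm_Pair add.commute)

lemma eventually_at_0_iff:
  "eventually P (at (0::real \<times> real)) \<longleftrightarrow> (\<exists>d>0. \<forall>h. h \<noteq> 0 \<and> norm h < d \<longrightarrow> P h)"
  unfolding eventually_at by (simp add: dist_norm)

lemma norm_power_bigo_at_0:
  assumes "j \<le> m"
  shows "(\<lambda>h::real\<times>real. norm h ^ m) \<in> O[at 0](\<lambda>h. norm h ^ j)"
proof (rule landau_o.bigI[of 1])
  have "eventually (\<lambda>h::real\<times>real. norm h < 1) (at 0)"
    unfolding eventually_at_0_iff by (auto intro!: exI[of _ 1])
  then show "eventually (\<lambda>h. norm (norm h ^ m) \<le> 1 * norm (norm h ^ j)) (at (0::real\<times>real))"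
    by eventually_elim (use assms in \<open>auto intro: power_decreasing\<close>)
qed simp

lemma norm_power_Suc_smallo: "(\<lambda>h::real \<times> real. norm h ^ Suc k) \<in> o[at 0](\<lambda>h. norm h ^ k)"
proof (rule smalloI_tendsto)
  show "((\<lambda>h::real\<times>real. norm h ^ Suc k / norm h ^ k) \<longlongrightarrow> 0) (at 0)"
    by (rule tendsto_eq_rhs[OF tendsto_cong[THEN iffD1, OF _ tendsto_norm_zero[OF tendsto_ident_at]]])
       (auto simp: eventually_at_0_iff intro!: exI[of _ 1])
  show "eventually (\<lambda>h::real\<times>real. norm h ^ k \<noteq> 0) (at 0)"
    unfolding eventually_at_0_iff by (auto intro!: exI[of _ 1])
qed

lemma smallo_norm_power_tendsto_0:
  fixes E :: "real \<times> real \<Rightarrow> real"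
  assumes "E \<in> o[at 0](\<lambda>h. norm h ^ m)"
  shows "(E \<longlongrightarrow> 0) (at 0)"
  using smalloD_tendsto[OF landau_o.small_big_trans[OF assms norm_power_bigo_at_0[of 0 m]]]
  by simp

lemma has_derivative_shift: "((\<lambda>z. z - a) has_derivative (\<lambda>h. h)) (at z)"
  by (rule has_derivative_eq_rhs, (rule derivative_intros)+) auto

lemma has_derivative_zero_of_smallo:
  fixes F :: "real \<times> real \<Rightarrow> real"
  assumes "F a = 0" "(\<lambda>h. F (a + h)) \<in> o[at 0](\<lambda>h. norm h ^ m)" "m \<ge> 1"
  shows "(F has_derivative (\<lambda>h. 0)) (at a)"
proof -
  have "(\<lambda>h. F (a + h)) \<in> o[at 0](\<lambda>h. norm h)"
    using landau_o.small_big_trans[OF assms(2) norm_power_bigo_at_0[of 1 m]] assms(3) by simp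
  from tendsto_norm[OF smalloD_tendsto[OF this]] show ?thesis
    unfolding has_derivative_at using assms(1) by (simp add: norm_divide)
qed

lemma smallo_swap:
  fixes F :: "real \<times> real \<Rightarrow> real"
  assumes "(\<lambda>h. F (a + h)) \<in> o[at 0](\<lambda>h. norm h ^ m)"
  shows "(\<lambda>h. F (a + (snd h, fst h))) \<in> o[at 0](\<lambda>h. norm h ^ m)"
proof -
  have "filterlim (\<lambda>h::real \<times> real. (snd h, fst h)) (at 0) (at 0)"
    unfolding filterlim_at
    by (auto simp: eventually_at_filter zero_prod_def intro!: tendsto_eq_intros always_eventually)
  from landau_o.small.compose[OF assms this] show ?thesis by (simp add: norm_swap)
qed

lemma filterlim_ray_at_0: "filterlim (\<lambda>u::real. (u, u * v)) (at (0::real \<times> real)) (at 0)"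
  unfolding filterlim_at
proof
  show "\<forall>\<^sub>F u in at 0. (u, u * v) \<in> UNIV \<and> (u, u * v) \<noteq> 0"
    unfolding eventually_at by (auto intro!: exI[of _ 1] simp: zero_prod_def)
  show "((\<lambda>u. (u, u * v)) \<longlongrightarrow> 0) (at 0)"
    unfolding zero_prod_def by (auto intro!: tendsto_eq_intros)
qed

lemma smallo_along_ray:
  fixes F :: "real \<times> real \<Rightarrow> real"
  assumes "(\<lambda>h. F (a + h)) \<in> o[at 0](\<lambda>h. norm h ^ m)" "j \<le> m"
  shows "((\<lambda>u. F (fst a + u, snd a + u * v) / u ^ j) \<longlongrightarrow> 0) (at 0)"
proof -
  have "(\<lambda>u. F (a + (u, u * v))) \<in> o[at 0](\<lambda>u. norm (u, u * v) ^ m)"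
    using landau_o.small.compose[OF assms(1) filterlim_ray_at_0] .
  moreover have "(\<lambda>u. norm (u, u * v) ^ m) \<in> O[at 0](\<lambda>u. u ^ j)"
  proof (rule landau_o.bigI[of "(1 + \<bar>v\<bar>) ^ m"])
    have "eventually (\<lambda>u::real. \<bar>u\<bar> < 1) (at 0)"
      unfolding eventually_at by (auto intro!: exI[of _ 1])
    then show "eventually (\<lambda>u. norm (norm (u, u * v) ^ m) \<le> (1 + \<bar>v\<bar>) ^ m * norm (u ^ j)) (at 0)"
    proof eventually_elim
      case (elim u)
      have "norm (u, u * v) \<le> \<bar>u\<bar> * (1 + \<bar>v\<bar>)"
        using norm_Pair_le[of u "u * v"] by (simp add: abs_mult algebra_simps)
      then have "norm (u, u * v) ^ m \<le> (1 + \<bar>v\<bar>) ^ m * \<bar>u\<bar> ^ m"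
        by (metis mult.commute norm_ge_zero power_mono power_mult_distrib)
      also have "\<dots> \<le> (1 + \<bar>v\<bar>) ^ m * \<bar>u\<bar> ^ j"
        using elim assms(2) by (intro mult_left_mono power_decreasing) auto
      finally show ?case by (simp add: power_abs)
    qed
  qed simp
  ultimately have "(\<lambda>u. F (a + (u, u * v))) \<in> o[at 0](\<lambda>u. u ^ j)"
    by (rule landau_o.small_big_trans)
  from smalloD_tendsto[OF this] show ?thesis by (simp add: add_Pair_right)
qed

section \<open>C^k functions have polynomial expansions\<close>

lemma has_poly_expansion_0:
  assumes "isCont f a"
  shows "has_poly_expansion 0 f a"
proof -
  have "(\<lambda>h. f (a + h) - f a - 0) \<in> o[at 0](\<lambda>h. norm h ^ 0)"
  proof (rule landau_o.smallI)
    fix c :: real assume "c > 0"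
    with assms have "eventually (\<lambda>h. dist (f (a + h)) (f a) < c) (at 0)"
      by (simp add: isCont_iff tendsto_iff)
    then show "eventually (\<lambda>h. norm (f (a + h) - f a - 0) \<le> c * norm (norm h ^ 0)) (at 0)"
      by eventually_elim (simp add: dist_norm)
  qed
  then show ?thesis
    unfolding has_poly_expansion_def using poly2_deg_le_zero by blast
qed

lemma has_poly_expansion_monomial_sum:
  assumes "has_poly_expansion k g a"
  obtains b where "(\<lambda>h. g (a + h) - monomial_sum k b h) \<in> o[at 0](\<lambda>h. norm h ^ k)"
proof -
  obtain Q where "poly2_deg_le k Q" and Q: "(\<lambda>h. g (a + h) - g a - Q h) \<in> o[at 0](\<lambda>h. norm h ^ k)"
    using assms unfolding has_poly_expansion_def by blast
  then obtain b where b: "(\<lambda>h. g a + Q h) = monomial_sum k b"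
    using poly2_deg_le_add[OF poly2_deg_le_const] poly2_deg_le_iff_monomial_sum by metis
  have "(\<lambda>h. g (a + h) - monomial_sum k b h) = (\<lambda>h. g (a + h) - g a - Q h)"
    unfolding b[symmetric] by (simp add: algebra_simps)
  with Q that show thesis by metis
qed

text \<open>Mean value theorem on the segment from a to a + h.\<close>
lemma remainder_bound_on_segment:
  fixes f g1 g2 :: "real \<times> real \<Rightarrow> real"
  assumes der: "\<And>z. (f has_derivative (\<lambda>h. g1 z * fst h + g2 z * snd h)) (at z)"
    and bound: "\<And>w. w \<noteq> 0 \<Longrightarrow> norm w < d \<Longrightarrow>
      \<bar>g1 (a + w) - monomial_sum k b1 w\<bar> \<le> e * norm w ^ k \<and>
      \<bar>g2 (a + w) - monomial_sum k b2 w\<bar> \<le> e * norm w ^ k"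
    and "e \<ge> 0" "h \<noteq> 0" "norm h < d"
  shows "\<bar>f (a + h) - f a - ray_primitive k b1 b2 h\<bar> \<le> 2 * e * norm h ^ Suc k"
proof -
  define \<phi> where "\<phi> t = f (a + t *\<^sub>R h) - ray_primitive k b1 b2 (t *\<^sub>R h)" for t
  define E1 where "E1 t = g1 (a + t *\<^sub>R h) - monomial_sum k b1 (t *\<^sub>R h)" for t
  define E2 where "E2 t = g2 (a + t *\<^sub>R h) - monomial_sum k b2 (t *\<^sub>R h)" for t
  have deriv: "(\<phi> has_real_derivative E1 t * fst h + E2 t * snd h) (at t)" for t
  proof -
    have ray: "((\<lambda>t. a + t *\<^sub>R h) has_derivative (\<lambda>s. s *\<^sub>R h)) (at t)"
      by (auto intro!: derivative_eq_intros)
    have "((\<lambda>t. f (a + t *\<^sub>R h)) has_real_derivative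
        g1 (a + t *\<^sub>R h) * fst h + g2 (a + t *\<^sub>R h) * snd h) (at t)"
      unfolding has_field_derivative_def
      by (rule has_derivative_eq_rhs[OF has_derivative_compose[OF ray der]])
         (simp add: fun_eq_iff algebra_simps)
    from DERIV_diff[OF this has_real_derivative_ray_primitive]
    show ?thesis unfolding \<phi>_def[abs_def] E1_def E2_def by (simp add: algebra_simps)
  qed
  then obtain z where z: "0 < z" "z < 1" and mvt: "\<phi> 1 - \<phi> 0 = E1 z * fst h + E2 z * snd h"
    using MVT2[of 0 1 \<phi> "\<lambda>t. E1 t * fst h + E2 t * snd h"] deriv by auto
  have shorter: "norm (z *\<^sub>R h) \<le> norm h"
    using z mult_left_le_one_le[of "norm h" z] by simp
  have "e * norm (z *\<^sub>R h) ^ k \<le> e * norm h ^ k"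
    using shorter \<open>e \<ge> 0\<close> by (simp add: mult_left_mono power_mono)
  moreover have "z *\<^sub>R h \<noteq> 0" "norm (z *\<^sub>R h) < d"
    using z assms(4) shorter assms(5) by (simp, linarith)
  ultimately have "\<bar>E1 z\<bar> \<le> e * norm h ^ k" "\<bar>E2 z\<bar> \<le> e * norm h ^ k"
    using bound[of "z *\<^sub>R h"] unfolding E1_def E2_def by auto
  then have "\<bar>E1 z * fst h + E2 z * snd h\<bar> \<le> e * norm h ^ k * norm h + e * norm h ^ k * norm h"
    using abs_fst_le_norm[of h] abs_snd_le_norm[of h]
    by (intro order_trans[OF abs_triangle_ineq] add_mono) (auto simp: abs_mult intro!: mult_mono)
  moreover have "\<phi> 1 - \<phi> 0 = f (a + h) - f a - ray_primitive k b1 b2 h"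
    by (simp add: \<phi>_def ray_primitive_zero)
  ultimately show ?thesis using mvt by (simp add: algebra_simps)
qed

lemma has_poly_expansion_Suc_of_partials:
  fixes f g1 g2 :: "real \<times> real \<Rightarrow> real"
  assumes der: "\<And>z. (f has_derivative (\<lambda>h. g1 z * fst h + g2 z * snd h)) (at z)"
    and "has_poly_expansion k g1 a" "has_poly_expansion k g2 a"
  shows "has_poly_expansion (Suc k) f a"
proof -
  obtain b1 where b1: "(\<lambda>h. g1 (a + h) - monomial_sum k b1 h) \<in> o[at 0](\<lambda>h. norm h ^ k)"
    using assms(2) by (rule has_poly_expansion_monomial_sum)
  obtain b2 where b2: "(\<lambda>h. g2 (a + h) - monomial_sum k b2 h) \<in> o[at 0](\<lambda>h. norm h ^ k)"
    using assms(3) by (rule has_poly_expansion_monomial_sum)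
  have "(\<lambda>h. f (a + h) - f a - ray_primitive k b1 b2 h) \<in> o[at 0](\<lambda>h. norm h ^ Suc k)"
  proof (rule landau_o.smallI)
    fix c :: real assume "c > 0"
    then have c2: "c / 2 > 0" by simp
    have "eventually (\<lambda>h. \<bar>g1 (a + h) - monomial_sum k b1 h\<bar> \<le> c / 2 * norm h ^ k \<and>
        \<bar>g2 (a + h) - monomial_sum k b2 h\<bar> \<le> c / 2 * norm h ^ k) (at 0)"
      using landau_o.smallD[OF b1 c2] landau_o.smallD[OF b2 c2]
      by eventually_elim auto
    then obtain d where "d > 0" and bound: "\<And>w. w \<noteq> 0 \<Longrightarrow> norm w < d \<Longrightarrow>
        \<bar>g1 (a + w) - monomial_sum k b1 w\<bar> \<le> c / 2 * norm w ^ k \<and>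
        \<bar>g2 (a + w) - monomial_sum k b2 w\<bar> \<le> c / 2 * norm w ^ k"
      unfolding eventually_at_0_iff by blast
    show "eventually (\<lambda>h. norm (f (a + h) - f a - ray_primitive k b1 b2 h)
        \<le> c * norm (norm h ^ Suc k)) (at 0)"
      unfolding eventually_at_0_iff
      using \<open>d > 0\<close> remainder_bound_on_segment[OF der bound] \<open>c > 0\<close> by auto
  qed
  then show ?thesis
    unfolding has_poly_expansion_def using poly2_deg_le_ray_primitive by blast
qed

lemma Ck_imp_has_poly_expansion: "Ck k f \<Longrightarrow> has_poly_expansion k f a"
proof (induction k arbitrary: f a)
  case 0
  then show ?case
    by (metis Ck.simps(1) UNIV_I continuous_on_eq_continuous_at open_UNIV has_poly_expansion_0)
next
  case (Suc k f a)
  then obtain g1 g2 where "\<And>z. (f has_derivative (\<lambda>h. g1 z * fst h + g2 z * snd h)) (at z)"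
    and "Ck k g1" "Ck k g2" by auto
  with Suc.IH show ?case by (blast intro: has_poly_expansion_Suc_of_partials)
qed

section \<open>Regularity along the exceptional divisor of a blowing-up\<close>

lemma regular_at_iff_polyfun:
  "regular_at g z \<longleftrightarrow>
    (\<exists>p q. polyfun p \<and> polyfun q \<and> q z \<noteq> 0 \<and> (\<forall>w. q w \<noteq> 0 \<longrightarrow> g w = p w / q w))"
  unfolding regular_at_def poly2_iff_polyfun ..

lemma regular_at_add_polyfun:
  assumes "regular_at g z" "polyfun r"
  shows "regular_at (\<lambda>w. g w + r w) z"
proof -
  obtain p q where "polyfun p" "polyfun q" "q z \<noteq> 0"
    and g: "\<And>w. q w \<noteq> 0 \<Longrightarrow> g w = p w / q w"
    using assms(1) unfolding regular_at_iff_polyfun by blast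
  moreover have "polyfun (\<lambda>w. p w + r w * q w)"
    by (intro polyfun.intros \<open>polyfun p\<close> \<open>polyfun q\<close> assms(2))
  moreover have "\<forall>w. q w \<noteq> 0 \<longrightarrow> g w + r w = (p w + r w * q w) / q w"
    using g by (simp add: field_simps)
  ultimately show ?thesis unfolding regular_at_iff_polyfun by blast
qed

lemma regular_at_fst_power_fraction:
  assumes "polyfun N" "polyfun q" "q z \<noteq> 0"
    and "\<And>w. q w \<noteq> 0 \<Longrightarrow> G w = fst w ^ m * N w / q w"
  shows "regular_at G z"
proof -
  have "polyfun (\<lambda>w. fst w ^ m * N w)"
    by (intro polyfun_mult polyfun_power polyfun_fst assms(1))
  with assms show ?thesis
    unfolding regular_at_iff_polyfun
    by (intro exI[of _ "\<lambda>w. fst w ^ m * N w"] exI[of _ q] conjI allI impI) auto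
qed

text \<open>f \<circ> \<pi> is regular at every point of the exceptional divisor {u = 0} of the
  blowing-up \<pi> of the plane at a, in both standard charts.\<close>
definition regular_along_divisor :: "(real \<times> real \<Rightarrow> real) \<Rightarrow> real \<times> real \<Rightarrow> bool" where
  "regular_along_divisor f a \<longleftrightarrow> (\<forall>v.
     regular_at (\<lambda>w. f (fst a + fst w, snd a + fst w * snd w)) (0, v) \<and>
     regular_at (\<lambda>w. f (fst a + fst w * snd w, snd a + fst w)) (0, v))"

lemma regular_along_divisor_of_regular_at:
  assumes "regular_at f a"
  shows "regular_along_divisor f a"
proof -
  obtain p q where pq: "polyfun p" "polyfun q" "q a \<noteq> 0"
    and f: "\<And>w. q w \<noteq> 0 \<Longrightarrow> f w = p w / q w"
    using assms unfolding regular_at_iff_polyfun by blast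
  have chart: "regular_at (\<lambda>w. f (c w)) (0, v)"
    if "polyfun (\<lambda>w. fst (c w))" "polyfun (\<lambda>w. snd (c w))" "c (0, v) = a" for c v
  proof -
    have "polyfun (\<lambda>w. p (c w))" "polyfun (\<lambda>w. q (c w))"
      using polyfun_compose[OF _ that(1,2)] pq(1,2) by auto
    with that pq f show ?thesis
      unfolding regular_at_iff_polyfun
      by (intro exI[of _ "\<lambda>w. p (c w)"] exI[of _ "\<lambda>w. q (c w)"] conjI allI impI) auto
  qed
  have "polyfun (\<lambda>w. fst a + fst w)" "polyfun (\<lambda>w. snd a + fst w * snd w)"
    "polyfun (\<lambda>w. fst a + fst w * snd w)" "polyfun (\<lambda>w. snd a + fst w)"
    by (intro polyfun.intros)+
  then show ?thesis
    unfolding regular_along_divisor_def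
    using chart[of "\<lambda>w. (fst a + fst w, snd a + fst w * snd w)"]
      chart[of "\<lambda>w. (fst a + fst w * snd w, snd a + fst w)"]
    by simp
qed

lemma regular_along_divisor_of_blowup_regular:
  assumes "blowup_regular S f"
  shows "regular_along_divisor f a"
proof (cases "a \<in> S")
  case True
  with assms show ?thesis
    unfolding blowup_regular_def regular_along_divisor_def by blast
next
  case False
  with assms have "regular_at f a" unfolding blowup_regular_def by blast
  then show ?thesis by (rule regular_along_divisor_of_regular_at)
qed

lemma regular_along_divisor_add_polyfun:
  assumes "regular_along_divisor f a" "polyfun r"
  shows "regular_along_divisor (\<lambda>z. f z + r z) a"
  using assms unfolding regular_along_divisor_def
  by (auto intro!: regular_at_add_polyfun[where r="\<lambda>w. r (_ w)", simplified]
      polyfun_compose polyfun.intros)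

text \<open>If F is o(|h|^m) at a, the numerator of F in a chart of the blowing-up at a is
  divisible by u^(m+1): otherwise F would be of exact order u^j with j \<le> m along
  some line {v = const} of the chart.\<close>
lemma chart_numerator_divisible:
  fixes F :: "real \<times> real \<Rightarrow> real"
  assumes small: "(\<lambda>h. F (a + h)) \<in> o[at 0](\<lambda>h. norm h ^ m)"
    and pq: "polyfun p" "polyfun q" "q (0, v0) \<noteq> 0"
    and F: "\<And>w. q w \<noteq> 0 \<Longrightarrow> F (fst a + fst w, snd a + fst w * snd w) = p w / q w"
  obtains p' where "polyfun p'" "\<And>w. p w = fst w ^ Suc m * p' w"
proof -
  have "j \<le> Suc m \<Longrightarrow> \<exists>pj. polyfun pj \<and> (\<forall>w. p w = fst w ^ j * pj w)" for j
  proof (induction j)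
    case 0
    with pq show ?case by auto
  next
    case (Suc j)
    then obtain pj where pj: "polyfun pj" "\<And>w. p w = fst w ^ j * pj w" by auto
    have "pj (0, v) = 0" if qv: "q (0, v) \<noteq> 0" for v
    proof -
      have "eventually (\<lambda>u::real. u \<noteq> 0) (at 0)"
        by (rule eventually_neq_at_within)
      with tendsto_imp_eventually_ne[OF polyfun_tendsto_along_line[OF pq(2)] qv]
      have q_near: "eventually (\<lambda>u. q (u, v) \<noteq> 0 \<and> u \<noteq> 0) (at 0)"
        by (rule eventually_conj)
      have "((\<lambda>u. pj (u, v) / q (u, v)) \<longlongrightarrow> pj (0, v) / q (0, v)) (at 0)"
        using pj(1) pq(2) qv by (intro tendsto_divide polyfun_tendsto_along_line)
      moreover have "eventually (\<lambda>u. pj (u, v) / q (u, v) = F (fst a + u, snd a + u * v) / u ^ j) (at 0)"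
        using q_near
      proof eventually_elim
        case (elim u)
        then have "F (fst a + u, snd a + u * v) = u ^ j * pj (u, v) / q (u, v)"
          using F[of "(u, v)"] pj(2)[of "(u, v)"] by simp
        with elim show ?case by simp
      qed
      ultimately have "((\<lambda>u. F (fst a + u, snd a + u * v) / u ^ j) \<longlongrightarrow> pj (0, v) / q (0, v)) (at 0)"
        by (rule Lim_transform_eventually)
      moreover have "((\<lambda>u. F (fst a + u, snd a + u * v) / u ^ j) \<longlongrightarrow> 0) (at 0)"
        using Suc.prems by (intro smallo_along_ray[OF small]) simp
      ultimately have "pj (0, v) / q (0, v) = 0"
        by (rule tendsto_unique[OF at_neq_bot])
      with qv show ?thesis by simp
    qed
    then obtain p1 where "polyfun p1" "\<And>w. pj w = fst w * p1 w"
      using polyfun_divisible_fst[OF pj(1) pq(2,3)] by blast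
    with pj(2) show ?case by (intro exI[of _ p1]) auto
  qed
  with that show thesis by blast
qed

lemma chart_chain_rule:
  fixes F F1 F2 :: "real \<times> real \<Rightarrow> real"
  assumes der: "\<And>z. (F has_derivative (\<lambda>h. F1 z * fst h + F2 z * snd h)) (at z)"
    and "((\<lambda>w. F (fst a + fst w, snd a + fst w * snd w)) has_derivative
      (\<lambda>h. A * fst h + B * snd h)) (at w)"
  shows "F1 (fst a + fst w, snd a + fst w * snd w)
      + F2 (fst a + fst w, snd a + fst w * snd w) * snd w = A"
    and "F2 (fst a + fst w, snd a + fst w * snd w) * fst w = B"
proof -
  have "((\<lambda>w. (fst a + fst w, snd a + fst w * snd w)) has_derivative
      (\<lambda>h. (fst h, snd w * fst h + fst w * snd h))) (at w)"
    by (rule has_derivative_eq_rhs, (rule derivative_intros)+)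
       (auto simp: fun_eq_iff algebra_simps)
  from has_derivative_compose[OF this der]
  have "((\<lambda>w. F (fst a + fst w, snd a + fst w * snd w)) has_derivative
      (\<lambda>h. F1 (fst a + fst w, snd a + fst w * snd w) * fst h
         + F2 (fst a + fst w, snd a + fst w * snd w) * (snd w * fst h + fst w * snd h))) (at w)"
    by simp
  note derivatives_agree = has_derivative_unique[OF this assms(2)]
  show "F1 (fst a + fst w, snd a + fst w * snd w)
      + F2 (fst a + fst w, snd a + fst w * snd w) * snd w = A"
    using fun_cong[OF derivatives_agree, of "(1, 0)"] by simp
  show "F2 (fst a + fst w, snd a + fst w * snd w) * fst w = B"
    using fun_cong[OF derivatives_agree, of "(0, 1)"] by simp
qed

text \<open>In the chart c(u, v) = a + (u, u v), F \<circ> c = u^(m+1) p'/q; comparing the chain rule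
  for F \<circ> c with the derivative of the right-hand side expresses F1 \<circ> c and F2 \<circ> c
  as u^m times rational functions with denominator q^2. On {u = 0} the chart collapses
  to a, where F1 and F2 vanish.\<close>
lemma partials_in_chart:
  fixes F F1 F2 :: "real \<times> real \<Rightarrow> real"
  assumes der: "\<And>z. (F has_derivative (\<lambda>h. F1 z * fst h + F2 z * snd h)) (at z)"
    and small: "(\<lambda>h. F (a + h)) \<in> o[at 0](\<lambda>h. norm h ^ m)" and "m \<ge> 1"
    and "F1 a = 0" "F2 a = 0"
    and reg: "regular_at (\<lambda>w. F (fst a + fst w, snd a + fst w * snd w)) (0, v0)"
  obtains N1 N2 d where "polyfun N1" "polyfun N2" "polyfun d" "d (0, v0) \<noteq> 0"
    "\<And>w. d w \<noteq> 0 \<Longrightarrow> F1 (fst a + fst w, snd a + fst w * snd w) = fst w ^ m * N1 w / d w"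
    "\<And>w. d w \<noteq> 0 \<Longrightarrow> F2 (fst a + fst w, snd a + fst w * snd w) = fst w ^ m * N2 w / d w"
proof -
  define c where "c w = (fst a + fst w, snd a + fst w * snd w)" for w :: "real \<times> real"
  obtain p q where pq: "polyfun p" "polyfun q" "q (0, v0) \<noteq> 0"
    and Fc: "\<And>w. q w \<noteq> 0 \<Longrightarrow> F (c w) = p w / q w"
    using reg unfolding regular_at_iff_polyfun c_def by blast
  obtain p' where p': "polyfun p'" "\<And>w. p w = fst w ^ Suc m * p' w"
    using chart_numerator_divisible[OF small pq] Fc unfolding c_def by blast
  obtain p'x p'y where dp: "polyfun p'x" "polyfun p'y"
    "\<And>z. (p' has_derivative (\<lambda>h. p'x z * fst h + p'y z * snd h)) (at z)"
    using polyfun_has_derivative[OF p'(1)] by blast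
  obtain qx qy where dq: "polyfun qx" "polyfun qy"
    "\<And>z. (q has_derivative (\<lambda>h. qx z * fst h + qy z * snd h)) (at z)"
    using polyfun_has_derivative[OF pq(2)] by blast
  define N1 where "N1 w = real (Suc m) * p' w * q w + fst w * (p'x w * q w - p' w * qx w)
    - snd w * (p'y w * q w - p' w * qy w)" for w
  define N2 where "N2 w = p'y w * q w - p' w * qy w" for w
  have partials: "F1 (c w) = fst w ^ m * N1 w / (q w * q w) \<and>
      F2 (c w) = fst w ^ m * N2 w / (q w * q w)" if qw: "q w \<noteq> 0" for w
  proof -
    define A where "A = real (Suc m) * fst w ^ m * (p' w / q w)
      + fst w ^ Suc m * ((p'x w * q w - p' w * qx w) / (q w * q w))"
    define B where "B = fst w ^ Suc m * ((p'y w * q w - p' w * qy w) / (q w * q w))"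
    have "((\<lambda>w. fst w ^ Suc m * (p' w / q w)) has_derivative (\<lambda>h. A * fst h + B * snd h)) (at w)"
      by (rule has_derivative_eq_rhs,
          (rule has_derivative_mult has_derivative_divide has_derivative_power dp(3) dq(3) qw
            has_derivative_fst[OF has_derivative_ident])+)
         (use qw in \<open>auto simp: fun_eq_iff A_def B_def field_simps\<close>)
    then have "((\<lambda>w. F (c w)) has_derivative (\<lambda>h. A * fst h + B * snd h)) (at w)"
      by (rule has_derivative_transform_within_open[OF _ open_polyfun_nonzero[OF pq(2)]])
         (use qw Fc p'(2) in auto)
    note chain = chart_chain_rule[OF der this[unfolded c_def], folded c_def]
    have F2_eq: "F2 (c w) * fst w = B" and F1_eq: "F1 (c w) + F2 (c w) * snd w = A"
      using chain by simp_all
    have F2c: "F2 (c w) = fst w ^ m * N2 w / (q w * q w)"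
    proof (cases "fst w = 0")
      case True
      then have "c w = a" by (simp add: c_def)
      with True \<open>m \<ge> 1\<close> \<open>F2 a = 0\<close> show ?thesis by simp
    next
      case False
      have "F2 (c w) * fst w = fst w ^ m * N2 w / (q w * q w) * fst w"
        using F2_eq by (simp add: B_def N2_def mult_ac)
      with False show ?thesis by (metis mult_right_cancel)
    qed
    have "F1 (c w) = A - snd w * (fst w ^ m * N2 w / (q w * q w))"
      using F1_eq F2c by (simp add: algebra_simps)
    also have "\<dots> = fst w ^ m * N1 w / (q w * q w)"
      using qw by (simp add: A_def N1_def N2_def field_simps)
    finally show ?thesis using F2c by simp
  qed
  have "polyfun N1" "polyfun N2" "polyfun (\<lambda>w. q w * q w)"
    unfolding N1_def[abs_def] N2_def[abs_def]
    by (intro polyfun_mult polyfun_diff polyfun.intros dp dq pq p')+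
  with that[of N1 N2 "\<lambda>w. q w * q w"] pq(3) partials show thesis
    unfolding c_def by simp
qed

lemma fst_power_fraction_local_bound:
  assumes "polyfun N" "polyfun d" "d (0, v0) \<noteq> 0"
    and G: "\<And>w. d w \<noteq> 0 \<Longrightarrow> G w = fst w ^ m * N w / d w"
  shows "\<exists>\<delta>>0. \<exists>C. \<forall>u v. \<bar>u\<bar> < \<delta> \<and> \<bar>v - v0\<bar> < \<delta> \<longrightarrow> \<bar>G (u, v)\<bar> \<le> C * \<bar>u\<bar> ^ m"
proof -
  define p0 where "p0 = (0::real, v0)"
  have "isCont (\<lambda>w. N w / d w) p0"
    using assms(1-3) unfolding p0_def by (intro continuous_intros polyfun_isCont)
  then obtain \<delta>1 where "\<delta>1 > 0" and \<delta>1: "\<And>w. dist w p0 < \<delta>1 \<Longrightarrow> dist (N w / d w) (N p0 / d p0) < 1"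
    unfolding continuous_at_eps_delta by (meson zero_less_one)
  obtain \<delta>2 where "\<delta>2 > 0" and \<delta>2: "\<And>w. dist w p0 < \<delta>2 \<Longrightarrow> dist (d w) (d p0) < \<bar>d p0\<bar>"
    using polyfun_isCont[OF assms(2), of p0] assms(3)
    unfolding continuous_at_eps_delta p0_def by (meson zero_less_abs_iff)
  define C where "C = \<bar>N p0 / d p0\<bar> + 1"
  have "\<bar>G (u, v)\<bar> \<le> C * \<bar>u\<bar> ^ m" if "\<bar>u\<bar> < min \<delta>1 \<delta>2 / 2" "\<bar>v - v0\<bar> < min \<delta>1 \<delta>2 / 2" for u v
  proof -
    have "dist (u, v) p0 \<le> \<bar>u\<bar> + \<bar>v - v0\<bar>"
      unfolding p0_def dist_norm using norm_Pair_le[of u "v - v0"] by simp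
    with that have "dist (u, v) p0 < \<delta>1" "dist (u, v) p0 < \<delta>2" by linarith+
    with \<delta>1 \<delta>2 have "d (u, v) \<noteq> 0" "\<bar>N (u, v) / d (u, v) - N p0 / d p0\<bar> < 1"
      by (force simp: dist_real_def)+
    moreover from this(2) have "\<bar>N (u, v) / d (u, v)\<bar> \<le> C"
      unfolding C_def using abs_triangle_ineq2[of "N (u, v) / d (u, v)" "N p0 / d p0"] by linarith
    ultimately have "\<bar>u\<bar> ^ m * \<bar>N (u, v) / d (u, v)\<bar> \<le> \<bar>u\<bar> ^ m * C"
      by (intro mult_left_mono) auto
    with G[of "(u, v)"] \<open>d (u, v) \<noteq> 0\<close> show ?thesis
      by (simp add: abs_mult power_abs mult.commute[of C])
  qed
  moreover have "min \<delta>1 \<delta>2 / 2 > 0" using \<open>\<delta>1 > 0\<close> \<open>\<delta>2 > 0\<close> by simp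
  ultimately show ?thesis by blast
qed

lemma partials_in_chart_regular_bounded:
  fixes F F1 F2 :: "real \<times> real \<Rightarrow> real"
  assumes "\<And>z. (F has_derivative (\<lambda>h. F1 z * fst h + F2 z * snd h)) (at z)"
    and "(\<lambda>h. F (a + h)) \<in> o[at 0](\<lambda>h. norm h ^ m)" "m \<ge> 1" "F1 a = 0" "F2 a = 0"
    and "regular_at (\<lambda>w. F (fst a + fst w, snd a + fst w * snd w)) (0, v0)"
  shows "regular_at (\<lambda>w. F1 (fst a + fst w, snd a + fst w * snd w)) (0, v0) \<and>
    regular_at (\<lambda>w. F2 (fst a + fst w, snd a + fst w * snd w)) (0, v0) \<and>
    (\<exists>\<delta>>0. \<exists>C. \<forall>u v. \<bar>u\<bar> < \<delta> \<and> \<bar>v - v0\<bar> < \<delta> \<longrightarrow>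
       \<bar>F1 (fst a + u, snd a + u * v)\<bar> \<le> C * \<bar>u\<bar> ^ m) \<and>
    (\<exists>\<delta>>0. \<exists>C. \<forall>u v. \<bar>u\<bar> < \<delta> \<and> \<bar>v - v0\<bar> < \<delta> \<longrightarrow>
       \<bar>F2 (fst a + u, snd a + u * v)\<bar> \<le> C * \<bar>u\<bar> ^ m)"
proof -
  obtain N1 N2 d where "polyfun N1" "polyfun N2" "polyfun d" "d (0, v0) \<noteq> 0"
    and "\<And>w. d w \<noteq> 0 \<Longrightarrow> F1 (fst a + fst w, snd a + fst w * snd w) = fst w ^ m * N1 w / d w"
    and "\<And>w. d w \<noteq> 0 \<Longrightarrow> F2 (fst a + fst w, snd a + fst w * snd w) = fst w ^ m * N2 w / d w"
    using partials_in_chart[OF assms] by blast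
  then show ?thesis
    using fst_power_fraction_local_bound[of _ d v0 "\<lambda>w. F1 (fst a + fst w, snd a + fst w * snd w)"]
      fst_power_fraction_local_bound[of _ d v0 "\<lambda>w. F2 (fst a + fst w, snd a + fst w * snd w)"]
    by (auto intro: regular_at_fst_power_fraction)
qed

lemma uniform_bound_on_interval:
  fixes B :: "real \<Rightarrow> real \<Rightarrow> real"
  assumes "\<And>v. \<exists>\<delta>>0. \<exists>C. \<forall>u v'. \<bar>u\<bar> < \<delta> \<and> \<bar>v' - v\<bar> < \<delta> \<longrightarrow> \<bar>B u v'\<bar> \<le> C * \<bar>u\<bar> ^ m"
  obtains \<delta> C where "\<delta> > 0" "C \<ge> 0"
    "\<And>u v. \<bar>u\<bar> < \<delta> \<Longrightarrow> v \<in> {-1..1} \<Longrightarrow> \<bar>B u v\<bar> \<le> C * \<bar>u\<bar> ^ m"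
proof -
  obtain \<delta> C where \<delta>: "\<And>v. \<delta> v > 0"
    and bound: "\<And>v u v'. \<bar>u\<bar> < \<delta> v \<Longrightarrow> \<bar>v' - v\<bar> < \<delta> v \<Longrightarrow> \<bar>B u v'\<bar> \<le> C v * \<bar>u\<bar> ^ m"
    using assms by metis
  have "{-1..1::real} \<subseteq> (\<Union>v\<in>{-1..1}. ball v (\<delta> v))"
    using \<delta> by force
  then obtain K where K: "K \<subseteq> {-1..1}" "finite K" "{-1..1} \<subseteq> (\<Union>v\<in>K. ball v (\<delta> v))"
    using compactE_image[of "{-1..1::real}" "{-1..1}" "\<lambda>v. ball v (\<delta> v)"] by auto
  define \<delta>' where "\<delta>' = Min (insert 1 (\<delta> ` K))"
  define C' where "C' = Max (insert 0 (C ` K))"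
  show thesis
  proof
    show "\<delta>' > 0" "C' \<ge> 0"
      using K(2) \<delta> unfolding \<delta>'_def C'_def by auto
    fix u v :: real assume "\<bar>u\<bar> < \<delta>'" "v \<in> {-1..1}"
    then obtain w where "w \<in> K" "v \<in> ball w (\<delta> w)"
      using K(3) by blast
    then have "\<bar>v - w\<bar> < \<delta> w"
      by (simp add: dist_real_def abs_minus_commute)
    have "\<delta>' \<le> \<delta> w" "C w \<le> C'"
      using K(2) \<open>w \<in> K\<close> unfolding \<delta>'_def C'_def by auto
    with \<open>\<bar>u\<bar> < \<delta>'\<close> \<open>\<bar>v - w\<bar> < \<delta> w\<close> have "\<bar>B u v\<bar> \<le> C w * \<bar>u\<bar> ^ m"
      by (intro bound) auto
    also have "\<dots> \<le> C' * \<bar>u\<bar> ^ m"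
      using \<open>C w \<le> C'\<close> by (rule mult_right_mono) simp
    finally show "\<bar>B u v\<bar> \<le> C' * \<bar>u\<bar> ^ m" .
  qed
qed

text \<open>Compactness of the exceptional divisor: local bounds in both charts of the
  blowing-up at a give a bound near a. The chart u \<mapsto> (u, u v) with |v| \<le> 1 covers the
  sector |y| \<le> |x|, the other chart the sector |x| \<le> |y|.\<close>
lemma bigo_of_chart_bounds:
  fixes H :: "real \<times> real \<Rightarrow> real"
  assumes "\<And>v. \<exists>\<delta>>0. \<exists>C. \<forall>u v'. \<bar>u\<bar> < \<delta> \<and> \<bar>v' - v\<bar> < \<delta> \<longrightarrow>
      \<bar>H (fst a + u, snd a + u * v')\<bar> \<le> C * \<bar>u\<bar> ^ m"
    and "\<And>v. \<exists>\<delta>>0. \<exists>C. \<forall>u v'. \<bar>u\<bar> < \<delta> \<and> \<bar>v' - v\<bar> < \<delta> \<longrightarrow>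
      \<bar>H (fst a + u * v', snd a + u)\<bar> \<le> C * \<bar>u\<bar> ^ m"
  shows "(\<lambda>h. H (a + h)) \<in> O[at 0](\<lambda>h. norm h ^ m)"
proof -
  obtain \<delta>1 C1 where "\<delta>1 > 0" "C1 \<ge> 0" and bound1: "\<And>u v. \<bar>u\<bar> < \<delta>1 \<Longrightarrow> v \<in> {-1..1} \<Longrightarrow>
      \<bar>H (fst a + u, snd a + u * v)\<bar> \<le> C1 * \<bar>u\<bar> ^ m"
    using uniform_bound_on_interval[OF assms(1)] by blast
  obtain \<delta>2 C2 where "\<delta>2 > 0" "C2 \<ge> 0" and bound2: "\<And>u v. \<bar>u\<bar> < \<delta>2 \<Longrightarrow> v \<in> {-1..1} \<Longrightarrow>
      \<bar>H (fst a + u * v, snd a + u)\<bar> \<le> C2 * \<bar>u\<bar> ^ m"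
    using uniform_bound_on_interval[OF assms(2)] by blast
  define C where "C = max C1 C2 + 1"
  have "\<bar>H (a + h)\<bar> \<le> C * norm h ^ m" if "norm h < min \<delta>1 \<delta>2" for h
  proof -
    obtain x y where h: "h = (x, y)" by fastforce
    have "\<bar>x\<bar> \<le> norm h" "\<bar>y\<bar> \<le> norm h"
      using abs_fst_le_norm[of h] abs_snd_le_norm[of h] h by auto
    have ah: "a + h = (fst a + x, snd a + y)" by (simp add: h add_Pair_right)
    show ?thesis
    proof (cases "\<bar>y\<bar> \<le> \<bar>x\<bar>")
      case True
      then have "y / x \<in> {-1..1}" "x * (y / x) = y"
        by (cases "x = 0"; auto simp: abs_le_iff divide_le_eq le_divide_eq)+
      with bound1[of x "y / x"] \<open>\<bar>x\<bar> \<le> norm h\<close> that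
      have "\<bar>H (a + h)\<bar> \<le> C1 * \<bar>x\<bar> ^ m" by (simp add: ah)
      also have "\<dots> \<le> C * norm h ^ m"
        using \<open>C1 \<ge> 0\<close> \<open>\<bar>x\<bar> \<le> norm h\<close> unfolding C_def by (intro mult_mono power_mono) auto
      finally show ?thesis .
    next
      case False
      then have "x / y \<in> {-1..1}" "y * (x / y) = x"
        by (cases "y = 0"; auto simp: abs_le_iff divide_le_eq le_divide_eq)+
      with bound2[of y "x / y"] \<open>\<bar>y\<bar> \<le> norm h\<close> that
      have "\<bar>H (a + h)\<bar> \<le> C2 * \<bar>y\<bar> ^ m" by (simp add: ah)
      also have "\<dots> \<le> C * norm h ^ m"
        using \<open>C2 \<ge> 0\<close> \<open>\<bar>y\<bar> \<le> norm h\<close> unfolding C_def by (intro mult_mono power_mono) auto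
      finally show ?thesis .
    qed
  qed
  moreover have "eventually (\<lambda>h::real \<times> real. norm h < min \<delta>1 \<delta>2) (at 0)"
    unfolding eventually_at_0_iff using \<open>\<delta>1 > 0\<close> \<open>\<delta>2 > 0\<close> by (auto intro!: exI[of _ "min \<delta>1 \<delta>2"])
  ultimately show ?thesis
    using \<open>C1 \<ge> 0\<close> by (intro landau_o.bigI[of C]) (auto simp: C_def elim!: eventually_mono)
qed

lemma partials_of_flat_function:
  fixes F F1 F2 :: "real \<times> real \<Rightarrow> real"
  assumes der: "\<And>z. (F has_derivative (\<lambda>h. F1 z * fst h + F2 z * snd h)) (at z)"
    and "F a = 0" and small: "(\<lambda>h. F (a + h)) \<in> o[at 0](\<lambda>h. norm h ^ m)" and "m \<ge> 1"
    and reg: "regular_along_divisor F a"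
  shows "F1 a = 0" "F2 a = 0" "regular_along_divisor F1 a" "regular_along_divisor F2 a"
    "(\<lambda>h. F1 (a + h)) \<in> O[at 0](\<lambda>h. norm h ^ m)" "(\<lambda>h. F2 (a + h)) \<in> O[at 0](\<lambda>h. norm h ^ m)"
proof -
  from has_derivative_unique[OF der has_derivative_zero_of_smallo[OF \<open>F a = 0\<close> small \<open>m \<ge> 1\<close>]]
  have "(\<lambda>h. F1 a * fst h + F2 a * snd h) = (\<lambda>h. 0)" .
  from fun_cong[OF this, of "(1, 0)"] fun_cong[OF this, of "(0, 1)"]
  show F1a: "F1 a = 0" and F2a: "F2 a = 0" by simp_all
  note chart1 = partials_in_chart_regular_bounded[OF der small \<open>m \<ge> 1\<close> F1a F2a]
  text \<open>The second chart at a is the first chart at the mirror image of a for the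
    mirror image of F.\<close>
  define Fs where "Fs z = F (snd z, fst z)" for z
  have "((\<lambda>z::real \<times> real. (snd z, fst z)) has_derivative (\<lambda>h. (snd h, fst h))) (at z)" for z
    by (intro derivative_intros)
  from has_derivative_compose[OF this der]
  have der_s: "(Fs has_derivative (\<lambda>h. F2 (snd z, fst z) * fst h + F1 (snd z, fst z) * snd h)) (at z)" for z
    unfolding Fs_def[abs_def] by (simp add: add.commute)
  have "(\<lambda>h. Fs ((snd a, fst a) + h)) = (\<lambda>h. F (a + (snd h, fst h)))"
    by (simp add: Fs_def fun_eq_iff add_Pair_right)
  with smallo_swap[OF small]
  have small_s: "(\<lambda>h. Fs ((snd a, fst a) + h)) \<in> o[at 0](\<lambda>h. norm h ^ m)" by simp
  note chart2 = partials_in_chart_regular_bounded[OF der_s small_s \<open>m \<ge> 1\<close>, simplified, OF F2a F1a]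
  from reg chart1 chart2 show "regular_along_divisor F1 a" "regular_along_divisor F2 a"
    unfolding regular_along_divisor_def by (simp_all add: Fs_def)
  from reg chart1 chart2 show "(\<lambda>h. F1 (a + h)) \<in> O[at 0](\<lambda>h. norm h ^ m)"
      "(\<lambda>h. F2 (a + h)) \<in> O[at 0](\<lambda>h. norm h ^ m)"
    unfolding regular_along_divisor_def by (auto simp: Fs_def intro!: bigo_of_chart_bounds)
qed

section \<open>Polynomial expansions of order k give C^k\<close>

lemma has_poly_expansion_remainder:
  assumes "isCont f a" "has_poly_expansion k f a"
  obtains P where "poly2_deg_le k P" "P 0 = 0"
    "(\<lambda>h. f (a + h) - f a - P h) \<in> o[at 0](\<lambda>h. norm h ^ k)"
proof -
  obtain P where P: "poly2_deg_le k P" and small: "(\<lambda>h. f (a + h) - f a - P h) \<in> o[at 0](\<lambda>h. norm h ^ k)"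
    using assms(2) unfolding has_poly_expansion_def by blast
  have "((\<lambda>h. f (a + h) - f a - P h) \<longlongrightarrow> f a - f a - P 0) (at 0)"
    using assms(1) polyfun_isCont[OF polyfun_of_poly2_deg_le[OF P], of 0]
    by (intro tendsto_diff tendsto_const) (auto simp: isCont_iff isCont_def)
  from tendsto_unique[OF at_neq_bot this smallo_norm_power_tendsto_0[OF small]]
  have "P 0 = 0" by simp
  with P small that show thesis by blast
qed

lemma has_derivative_of_has_poly_expansion:
  assumes "isCont f a" "has_poly_expansion (Suc k) f a"
  shows "\<exists>\<alpha> \<beta>. (f has_derivative (\<lambda>h. \<alpha> * fst h + \<beta> * snd h)) (at a)"
proof -
  obtain P where P: "poly2_deg_le (Suc k) P" "P 0 = 0"
    and small: "(\<lambda>h. f (a + h) - f a - P h) \<in> o[at 0](\<lambda>h. norm h ^ Suc k)"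
    using has_poly_expansion_remainder[OF assms] by blast
  obtain Px Py where "\<And>h. (P has_derivative (\<lambda>d. Px h * fst d + Py h * snd d)) (at h)"
    using poly2_deg_le_has_derivative[OF P(1)] by blast
  from has_derivative_compose[OF has_derivative_shift[of a a] this]
  have "((\<lambda>z. P (z - a)) has_derivative (\<lambda>h. Px 0 * fst h + Py 0 * snd h)) (at a)"
    by simp
  moreover have "((\<lambda>z. f z - f a - P (z - a)) has_derivative (\<lambda>h. 0)) (at a)"
    using small P(2) by (intro has_derivative_zero_of_smallo[where m="Suc k"]) auto
  ultimately have "((\<lambda>z. (f z - f a - P (z - a)) + f a + P (z - a)) has_derivative
      (\<lambda>h. 0 + 0 + (Px 0 * fst h + Py 0 * snd h))) (at a)"
    by (intro has_derivative_add has_derivative_const)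
  then have "(f has_derivative (\<lambda>h. Px 0 * fst h + Py 0 * snd h)) (at a)"
    by simp
  then show ?thesis by blast
qed

lemma isCont_has_poly_expansion_of_bigo:
  assumes "(\<lambda>h. E (a + h)) \<in> O[at 0](\<lambda>h. norm h ^ Suc k)" "E a = 0" "poly2_deg_le k Q"
  shows "isCont (\<lambda>z. E z + Q (z - a)) a" "has_poly_expansion k (\<lambda>z. E z + Q (z - a)) a"
proof -
  have small: "(\<lambda>h. E (a + h)) \<in> o[at 0](\<lambda>h. norm h ^ k)"
    using landau_o.big_small_trans[OF assms(1) norm_power_Suc_smallo] .
  have "((\<lambda>h. E (a + h) + Q h) \<longlongrightarrow> 0 + Q 0) (at 0)"
    using smallo_norm_power_tendsto_0[OF small] polyfun_isCont[OF polyfun_of_poly2_deg_le[OF assms(3)]]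
    by (intro tendsto_add) (auto simp: isCont_def)
  with assms(2) show "isCont (\<lambda>z. E z + Q (z - a)) a"
    by (simp add: isCont_iff)
  have "poly2_deg_le k (\<lambda>h. - Q 0 + Q h)"
    by (intro poly2_deg_le_add poly2_deg_le_const assms(3))
  with small assms(2) show "has_poly_expansion k (\<lambda>z. E z + Q (z - a)) a"
    unfolding has_poly_expansion_def by (intro exI[of _ "\<lambda>h. - Q 0 + Q h"] conjI) simp_all
qed

text \<open>The partial derivatives of F = f - f(a) - P(\<cdot> - a), P the Taylor polynomial, are
  O(|h|^(k+1)) at a; adding back the partial derivatives of P gives the expansions of g1, g2.\<close>
lemma partials_have_poly_expansion:
  fixes f g1 g2 :: "real \<times> real \<Rightarrow> real"
  assumes der: "\<And>z. (f has_derivative (\<lambda>h. g1 z * fst h + g2 z * snd h)) (at z)"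
    and "isCont f a" "regular_along_divisor f a" "has_poly_expansion (Suc k) f a"
  shows "regular_along_divisor g1 a \<and> isCont g1 a \<and> has_poly_expansion k g1 a"
    "regular_along_divisor g2 a \<and> isCont g2 a \<and> has_poly_expansion k g2 a"
proof -
  obtain P where P: "poly2_deg_le (Suc k) P" "P 0 = 0"
    and small: "(\<lambda>h. f (a + h) - f a - P h) \<in> o[at 0](\<lambda>h. norm h ^ Suc k)"
    using has_poly_expansion_remainder[OF assms(2,4)] by blast
  obtain Px Py where Pxy: "poly2_deg_le k Px" "poly2_deg_le k Py"
    "\<And>h. (P has_derivative (\<lambda>d. Px h * fst d + Py h * snd d)) (at h)"
    using poly2_deg_le_has_derivative[OF P(1)] by blast
  define r where "r z = - f a - P (z - a)" for z
  define F1 where "F1 z = g1 z - Px (z - a)" for z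
  define F2 where "F2 z = g2 z - Py (z - a)" for z
  have "((\<lambda>z. P (z - a)) has_derivative (\<lambda>h. Px (z - a) * fst h + Py (z - a) * snd h)) (at z)" for z
    using has_derivative_compose[OF has_derivative_shift Pxy(3)] by simp
  from has_derivative_add[OF der has_derivative_diff[OF has_derivative_const this]]
  have der_F: "((\<lambda>z. f z + r z) has_derivative (\<lambda>h. F1 z * fst h + F2 z * snd h)) (at z)" for z
    unfolding r_def F1_def F2_def
    by (rule has_derivative_eq_rhs) (simp add: fun_eq_iff algebra_simps)
  have "polyfun r"
    unfolding r_def
    by (intro polyfun_diff polyfun.intros polyfun_shift polyfun_of_poly2_deg_le[OF P(1)])
  then have "regular_along_divisor (\<lambda>z. f z + r z) a"
    using assms(3) by (rule regular_along_divisor_add_polyfun[rotated])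
  note flat = partials_of_flat_function[OF der_F _ _ _ this, where m="Suc k"]
  have "(\<lambda>h. f (a + h) + r (a + h)) = (\<lambda>h. f (a + h) - f a - P h)"
    by (simp add: r_def fun_eq_iff)
  with small have "(\<lambda>h. f (a + h) + r (a + h)) \<in> o[at 0](\<lambda>h. norm h ^ Suc k)"
    by simp
  moreover have "f a + r a = 0" by (simp add: r_def P(2))
  ultimately have "F1 a = 0" "F2 a = 0" "regular_along_divisor F1 a" "regular_along_divisor F2 a"
    "(\<lambda>h. F1 (a + h)) \<in> O[at 0](\<lambda>h. norm h ^ Suc k)" "(\<lambda>h. F2 (a + h)) \<in> O[at 0](\<lambda>h. norm h ^ Suc k)"
    using flat by simp_all
  moreover have "polyfun (\<lambda>z. Px (z - a))" "polyfun (\<lambda>z. Py (z - a))"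
    using Pxy(1,2) by (auto intro: polyfun_shift polyfun_of_poly2_deg_le)
  moreover have "g1 = (\<lambda>z. F1 z + Px (z - a))" "g2 = (\<lambda>z. F2 z + Py (z - a))"
    by (simp_all add: F1_def F2_def fun_eq_iff)
  ultimately show "regular_along_divisor g1 a \<and> isCont g1 a \<and> has_poly_expansion k g1 a"
    "regular_along_divisor g2 a \<and> isCont g2 a \<and> has_poly_expansion k g2 a"
    using Pxy(1,2)
    by (simp_all add: regular_along_divisor_add_polyfun isCont_has_poly_expansion_of_bigo)
qed

lemma Ck_of_has_poly_expansion:
  assumes "continuous_on UNIV f" "\<And>a. regular_along_divisor f a" "\<And>a. has_poly_expansion k f a"
  shows "Ck k f"
  using assms
proof (induction k arbitrary: f)
  case 0
  then show ?case by simp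
next
  case (Suc k f)
  have cont: "isCont f a" for a
    using Suc.prems(1) continuous_on_eq_continuous_at[OF open_UNIV] by blast
  have "\<forall>a. \<exists>\<alpha> \<beta>. (f has_derivative (\<lambda>h. \<alpha> * fst h + \<beta> * snd h)) (at a)"
    using has_derivative_of_has_poly_expansion[OF cont Suc.prems(3)] by blast
  then obtain g1 g2 where der: "\<And>z. (f has_derivative (\<lambda>h. g1 z * fst h + g2 z * snd h)) (at z)"
    by metis
  note partials = partials_have_poly_expansion[OF der cont Suc.prems(2,3)]
  have "Ck k g1"
    using partials(1) by (intro Suc.IH continuous_at_imp_continuous_on ballI) blast+
  moreover have "Ck k g2"
    using partials(2) by (intro Suc.IH continuous_at_imp_continuous_on ballI) blast+
  ultimately show ?case using der by auto
qed

theorem theorem3p8: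
  fixes k :: nat and f :: "real \<times> real \<Rightarrow> real"
  assumes "Rk1 0 f"
  shows "Rk1 k f \<longleftrightarrow> (\<forall>a. has_poly_expansion k f a)"
proof
  assume "Rk1 k f"
  then show "\<forall>a. has_poly_expansion k f a"
    by (simp add: Rk1_def Rk_def Ck_imp_has_poly_expansion)
next
  assume expansions: "\<forall>a. has_poly_expansion k f a"
  obtain S where S: "blowup_regular S f" and "continuous_on UNIV f" "rational2 f"
    using assms by (auto simp: Rk1_def Rk_def)
  moreover have "Ck k f"
    using Ck_of_has_poly_expansion[OF \<open>continuous_on UNIV f\<close>
      regular_along_divisor_of_blowup_regular[OF S]] expansions by blast
  ultimately show "Rk1 k f"
    unfolding Rk1_def Rk_def by blast
qed

end
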